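(* Let $d\ge2$ be even, let $\bar K^\infty(t)=\frac{1}{4\pi}(t+1)(\pi-\arccos t)$, and for integers $k\ge0$ define $$c_k^d=V_d\int_{-1}^1\bar K^\infty(t)\,P_{k,d}(t)\,(1-t^2)^{\frac{d-2}{2}}\,dt,\qquad V_d=\frac{\pi^{d/2}}{\Gamma(\frac d2+1)}.$$ With $p=k+\frac{d-2}{2}$, $C_1(d,k)=\frac{\pi^{d/2}}{d/2}\frac{(-1)^k}{2^k}\frac{1}{\Gamma(k+\frac d2)}$ and $C_2(q,d,k)=(-1)^q\binom{p}{q}\frac{(2q)!}{(2q-k)!}$, one has $$c_0^d=\tfrac12C_1(d,0)\Big(\frac{1}{d\,2^{d+1}}\binom{d}{d/2}+\frac{2^{d-1}}{d\binom{d-1}{d/2}}-\frac12\sum_{q=0}^{\frac{d-2}{2}}(-1)^q\binom{\frac{d-2}{2}}{q}\frac{1}{2q+1}\Big),$$ $$c_1^d=\tfrac12C_1(d,1)\sum_{q=1}^{p}C_2(q,d,1)\Big(\frac{1}{2(2q+1)}+\frac{1}{4q}\Big(1-\frac{1}{2^{2q}}\binom{2q}{q}\Big)\Big),$$ for even $k\ge2$: $$c_k^d=\tfrac12C_1(d,k)\sum_{q=\lceil k/2\rceil}^{p}C_2(q,d,k)\Big(\frac{-1}{2(2q-k+1)}+\frac{1}{2(2q-k+2)}\Big(1-\frac{1}{2^{2q-k+2}}\binom{2q-k+2}{\frac{2q-k+2}{2}}\Big)\Big),$$ and for odd $k\ge3$: $$c_k^d=\tfrac12C_1(d,k)\sum_{q=\lceil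 k/2\rceil}^{p}C_2(q,d,k)\,\frac{1}{2(2q-k+1)}\Big(1-\frac{1}{2^{2q-k+1}}\binom{2q-k+1}{\frac{2q-k+1}{2}}\Big).$$
   Context: $P_{k,d}$ is the Gegenbauer polynomial (zonal harmonic of degree $k$ on $\mathbb{S}^d\subset\mathbb{R}^{d+1}$): $P_{k,d}(t)=\frac{(-1)^k}{2^k}\frac{\Gamma(\frac d2)}{\Gamma(k+\frac d2)}\frac{1}{(1-t^2)^{\frac{d-2}{2}}}\frac{d^k}{dt^k}(1-t^2)^{k+\frac{d-2}{2}}$. $\bar K^\infty$ is the limiting Gram kernel of a two-layer ReLU network with bias (bias initialized at $0$, inputs in homogeneous coordinates $\frac{1}{\sqrt2}(\mathbf{x}^T,1)^T$); by the Funk–Hecke theorem $c_k^d$ is (up to the $k$-independent constant $V_d$) the eigenvalue of convolution with $\bar K^\infty$ on spherical harmonics of degree $k$. $\binom{p}{q}=0$ when $q>p$. *)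

theory Defs
  imports "HOL-Analysis.Analysis"
begin

text \<open>Gegenbauer polynomial via the Rodrigues formula; the k-th derivative is
  the iterated library derivative. d is assumed even in the theorem, so the
  exponent (d-2)/2 is the natural number d div 2 - 1.\<close>
definition gegenbauer :: "nat \<Rightarrow> nat \<Rightarrow> real \<Rightarrow> real" where
  "gegenbauer k d t =
     (-1)^k / 2^k * Gamma (real d / 2) / Gamma (real k + real d / 2)
     * (1 / (1 - t^2) ^ (d div 2 - 1))
     * (deriv ^^ k) (\<lambda>s. (1 - s^2) ^ (k + (d div 2 - 1))) t"

definition Kbar :: "real \<Rightarrow> real" where
  "Kbar t = 1 / (4 * pi) * (t + 1) * (pi - arccos t)"

definition Vd :: "nat \<Rightarrow> real" where
  "Vd d = pi powr (real d / 2) / Gamma (real d / 2 + 1)"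

definition ccoef :: "nat \<Rightarrow> nat \<Rightarrow> real" where
  "ccoef k d = Vd d * integral {-1..1}
      (\<lambda>t. Kbar t * gegenbauer k d t * (1 - t^2) ^ (d div 2 - 1))"

definition C1 :: "nat \<Rightarrow> nat \<Rightarrow> real" where
  "C1 d k = pi powr (real d / 2) / (real d / 2) * ((-1)^k / 2^k)
            * (1 / Gamma (real k + real d / 2))"

definition C2 :: "nat \<Rightarrow> nat \<Rightarrow> nat \<Rightarrow> real" where
  "C2 q d k = (-1)^q * real ((k + (d div 2 - 1)) choose q)
              * fact (2*q) / fact (2*q - k)"

end

theory Submission
  imports Defs "HOL-Computational_Algebra.Formal_Power_Series" "HOL-Computational_Algebra.Polynomial"
begin

text \<open>
  With \<open>p = k + (d - 2)/2\<close>, the weight \<open>(1 - t\<^sup>2)\<^bsup>(d-2)/2\<^esup>\<close> cancels the singular factor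
  of the Rodrigues formula, so \<open>c\<^sub>k\<^sup>d\<close> is \<open>C\<^sub>1(d,k)\<close> times the integral of
  \<open>K\<^sup>\<infinity>\<close> against the \<open>k\<close>-th derivative of \<open>(1 - t\<^sup>2)\<^sup>p\<close>. Expanding
  \<open>(1 - t\<^sup>2)\<^sup>p\<close> binomially turns this into a finite sum of kernel moments
  \<open>\<integral> K\<^sup>\<infinity>(t) t\<^sup>m dt\<close>; integrating by parts against \<open>\<pi> - arccos t\<close> reduces these to the
  arcsine moments \<open>\<integral> t\<^sup>n / \<surd>(1 - t\<^sup>2) dt\<close>, i.e. to central binomial coefficients.

  For \<open>k \<ge> 2\<close> each moment is the bracket of the claimed formula plus a multiple of
  \<open>1/(m+1)\<close> (and of \<open>1/((m+1)(m+2))\<close> when \<open>k\<close> is odd). Summed over \<open>q\<close>, these extra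
  terms are lower derivatives of \<open>(1 - t\<^sup>2)\<^sup>p\<close> evaluated at \<open>t = 1\<close>, which vanish because
  \<open>1\<close> is a root of order \<open>p\<close>. For \<open>k = 0\<close> the alternating sums are evaluated by the
  beta-type identity \<open>\<Sum> (-1)\<^sup>q C(n,q)/(x+q) = n!/(x)\<^sub>n\<^sub>+\<^sub>1\<close> and by Chu--Vandermonde.
\<close>

section \<open>Central binomial coefficients\<close>

definition central_binom_ratio :: "nat \<Rightarrow> real" where
  "central_binom_ratio n = real ((2*n) choose n) / 4^n"

lemma central_binom_ratio_pochhammer:
  "central_binom_ratio n = pochhammer (1/2) n / fact n"
proof -
  have "real ((2*n) choose n) = fact (2*n) / (fact n * fact n)"
    by (simp add: binomial_fact mult_2)
  then show ?thesis
    by (simp add: central_binom_ratio_def fact_double power_mult)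
qed

lemma central_binom_ratio_0 [simp]: "central_binom_ratio 0 = 1"
  by (simp add: central_binom_ratio_def)

lemma central_binom_ratio_pos: "central_binom_ratio n > 0"
  by (simp add: central_binom_ratio_def)

lemma central_binom_ratio_Suc:
  "central_binom_ratio (Suc n) = central_binom_ratio n * (2*n+1) / (2*n+2)"
  by (simp add: central_binom_ratio_pochhammer pochhammer_Suc field_simps)

lemma central_binom_ratio_binomial:
  assumes "even N"
  shows "1 / 2^N * real (N choose (N div 2)) = central_binom_ratio (N div 2)"
  using assms by (auto simp: central_binom_ratio_def power_mult elim!: evenE)

lemma central_binom_ratio_Suc_odd_binomial:
  "central_binom_ratio (Suc e) = real ((2*e+1) choose (e+1)) / 2^(2*e+1)"
proof -
  have "(2*e+2) choose (e+1) = ((2*e+1) choose e) + ((2*e+1) choose (e+1))"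
    using binomial_Suc_Suc[of "2*e+1" e] by simp
  moreover have "(2*e+1) choose e = (2*e+1) choose (e+1)"
    using binomial_symmetric[of e "2*e+1"] by simp
  ultimately have "real ((2*Suc e) choose Suc e) = 2 * real ((2*e+1) choose (e+1))"
    by simp
  moreover have "(4::real)^Suc e = 2 * 2^(2*e+1)"
    by (simp add: power_mult power_add)
  ultimately show ?thesis
    by (simp add: central_binom_ratio_def field_simps)
qed

lemma alternating_binomial_transform_central_binom_ratio:
  "(\<Sum>j\<le>n. (-1)^j * real (n choose j) * central_binom_ratio j) = central_binom_ratio n"
proof -
  have neg_half: "(- (1/2)) gchoose j = (-1)^j * central_binom_ratio j" for j
    by (simp add: central_binom_ratio_pochhammer gbinomial_pochhammer)
  have shifted: "central_binom_ratio n = (real n - 1/2) gchoose n"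
    by (simp add: central_binom_ratio_pochhammer gbinomial_pochhammer')
  have "(\<Sum>j\<le>n. (-1)^j * real (n choose j) * central_binom_ratio j)
      = (\<Sum>j=0..n. ((- (1/2)) gchoose j) * (real n gchoose (n - j)))"
    by (intro sum.cong) (auto simp: atMost_atLeast0 neg_half binomial_gbinomial[symmetric]
          binomial_symmetric[symmetric])
  also have "\<dots> = (real n - 1/2) gchoose n"
    by (simp add: gbinomial_Vandermonde)
  finally show ?thesis by (simp add: shifted)
qed

lemma alternating_binomial_sum_Suc:
  "(\<Sum>j\<le>Suc n. (-1)^j * real (Suc n choose j) * a j) =
   (\<Sum>j\<le>n. (-1)^j * real (n choose j) * (a j - a (Suc j)))"
proof -
  have pascal: "(\<Sum>j\<le>Suc n. (-1)^j * real (Suc n choose j) * a j) =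
     a 0 + (\<Sum>j\<le>n. (-1)^Suc j * real (n choose j) * a (Suc j))
         + (\<Sum>j\<le>n. (-1)^Suc j * real (n choose Suc j) * a (Suc j))"
    by (subst sum.atMost_Suc_shift) (simp add: sum.distrib[symmetric] algebra_simps)
  have "(\<Sum>j\<le>n. (-1)^j * real (n choose j) * a j) = (\<Sum>j\<le>Suc n. (-1)^j * real (n choose j) * a j)"
    by simp
  also have "\<dots> = a 0 + (\<Sum>j\<le>n. (-1)^Suc j * real (n choose Suc j) * a (Suc j))"
    by (subst sum.atMost_Suc_shift) simp
  finally show ?thesis
    unfolding pascal by (simp add: sum_subtractf right_diff_distrib sum_negf)
qed

lemma alternating_binomial_sum_reciprocal:
  "x > 0 \<Longrightarrow> (\<Sum>q\<le>n. (-1)^q * real (n choose q) / (x + q)) = fact n / pochhammer x (Suc n)"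
proof (induction n arbitrary: x)
  case 0
  then show ?case by simp
next
  case (Suc n)
  have "(\<Sum>q\<le>Suc n. (-1)^q * real (Suc n choose q) / (x + q)) =
        (\<Sum>q\<le>n. (-1)^q * real (n choose q) / (x+q)) - (\<Sum>q\<le>n. (-1)^q * real (n choose q) / ((x+1) + q))"
    using alternating_binomial_sum_Suc[of n "\<lambda>q. 1/(x+q)"]
    by (simp add: sum_subtractf right_diff_distrib add_ac)
  also have "\<dots> = fact n / pochhammer x (Suc n) - fact n / pochhammer (x+1) (Suc n)"
    using Suc by simp
  also have "\<dots> = fact (Suc n) / pochhammer x (Suc (Suc n))"
  proof -
    have rec1: "pochhammer x (Suc (Suc n)) = pochhammer x (Suc n) * (x + Suc n)"
      by (simp add: pochhammer_Suc)
    have rec2: "pochhammer x (Suc (Suc n)) = x * pochhammer (x+1) (Suc n)"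
      by (rule pochhammer_rec)
    have "fact n / pochhammer x (Suc n) = fact n * (x + Suc n) / pochhammer x (Suc (Suc n))"
      using Suc.prems pochhammer_pos[of x "Suc n"] unfolding rec1 by simp
    moreover have "fact n / pochhammer (x+1) (Suc n) = fact n * x / pochhammer x (Suc (Suc n))"
      using Suc.prems pochhammer_pos[of "x+1" "Suc n"] unfolding rec2 by simp
    ultimately show ?thesis by (simp add: diff_divide_distrib[symmetric] algebra_simps)
  qed
  finally show ?case .
qed

lemma alternating_binomial_sum_odd_reciprocal:
  "(\<Sum>q\<le>e. (-1)^q * real (e choose q) / (2*real q + 1)) = 1 / (2 * (real e + 1) * central_binom_ratio (Suc e))"
proof -
  have "(-1)^q * real (e choose q) / (2*real q + 1) = (-1)^q * real (e choose q) / (1/2 + real q) / 2" for q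
  proof -
    have "(1/2 + real q) * 2 = 2 * real q + 1"
      by simp
    then show ?thesis
      by (simp only: divide_divide_eq_left)
  qed
  then have "(\<Sum>q\<le>e. (-1)^q * real (e choose q) / (2*real q + 1)) =
      (\<Sum>q\<le>e. (-1)^q * real (e choose q) / (1/2 + real q)) / 2"
    by (simp only: sum_divide_distrib)
  also have "\<dots> = fact e / pochhammer (1/2) (Suc e) / 2"
    by (simp add: alternating_binomial_sum_reciprocal)
  also have "\<dots> = 1 / (2 * (real e + 1) * central_binom_ratio (Suc e))"
  proof -
    have "pochhammer (1/2) (Suc e) = central_binom_ratio (Suc e) * fact (Suc e)"
      by (simp add: central_binom_ratio_pochhammer)
    moreover have "fact (Suc e) = (real e + 1) * (fact e :: real)"
      by (simp add: add.commute)
    moreover have "f / (c * ((x + 1) * f)) / 2 = 1 / (2 * (x + 1) * c)" if "f > 0" for f c x :: real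
      using that by simp
    ultimately show ?thesis
      by simp
  qed
  finally show ?thesis .
qed

lemma alternating_binomial_sum_one_minus_central_binom_ratio:
  "(\<Sum>q\<le>e. (-1)^q * real (e choose q) * (1 - central_binom_ratio (Suc q)) / (2*real q + 2)) =
    central_binom_ratio (Suc e) / (2 * (real e + 1))"
proof -
  have term_absorb: "(-1)^q * real (e choose q) * (1 - central_binom_ratio (Suc q)) / (2*real q + 2) =
      - ((-1)^Suc q * real (Suc e choose Suc q) * (1 - central_binom_ratio (Suc q))) / (2 * (real e + 1))" for q
  proof -
    have "real (Suc e) * real (e choose q) = real (Suc e choose Suc q) * real (Suc q)"
      using Suc_times_binomial_eq[of e q] by (metis of_nat_mult)
    then have absorb: "real (e choose q) / (2*real q + 2) = real (Suc e choose Suc q) / (2 * (real e + 1))"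
      by (simp add: field_simps)
    have "(-1)^q * real (e choose q) * (1 - central_binom_ratio (Suc q)) / (2*real q + 2) =
        (-1)^q * (1 - central_binom_ratio (Suc q)) * (real (e choose q) / (2*real q + 2))"
      by (simp add: mult_ac)
    also have "\<dots> = (-1)^q * (1 - central_binom_ratio (Suc q)) * (real (Suc e choose Suc q) / (2 * (real e + 1)))"
      by (simp only: absorb)
    finally show ?thesis
      by (simp add: mult_ac)
  qed
  have "(\<Sum>q\<le>e. (-1)^Suc q * real (Suc e choose Suc q) * (1 - central_binom_ratio (Suc q)))
      = (\<Sum>j\<le>Suc e. (-1)^j * real (Suc e choose j) * (1 - central_binom_ratio j))"
    by (subst sum.atMost_Suc_shift) simp
  also have "\<dots> = (\<Sum>j\<le>Suc e. (-1)^j * real (Suc e choose j))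
      - (\<Sum>j\<le>Suc e. (-1)^j * real (Suc e choose j) * central_binom_ratio j)"
    by (simp add: sum_subtractf right_diff_distrib)
  also have "\<dots> = - central_binom_ratio (Suc e)"
    using choose_alternating_sum[of "Suc e", where 'a=real]
    by (simp add: alternating_binomial_transform_central_binom_ratio)
  finally show ?thesis
    unfolding term_absorb by (simp add: sum_divide_distrib[symmetric] sum_negf)
qed

section \<open>Moments of the arcsine weight and of the kernel\<close>

lemma one_minus_square_pos: "x \<in> {-1<..<1} \<Longrightarrow> 0 < 1 - x^2" for x :: real
  using abs_square_less_1[of x] by auto

definition arcsine_moment :: "nat \<Rightarrow> real" where
  "arcsine_moment n = (if even n then pi * central_binom_ratio (n div 2) else 0)"

lemma has_integral_arcsine_moment_step:
  assumes "((\<lambda>t. t^n / sqrt (1 - t^2)) has_integral I) {-1..1}"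
  shows "((\<lambda>t. t^(n+2) / sqrt (1 - t^2)) has_integral (n+1) / (n+2) * I) {-1..1}"
proof -
  let ?F = "\<lambda>t::real. t^(n+1) * sqrt (1 - t^2)"
  let ?f = "\<lambda>t::real. (n+1) * (t^n / sqrt (1 - t^2)) - (n+2) * (t^(n+2) / sqrt (1 - t^2))"
  have "(?f has_integral (?F 1 - ?F (-1))) {-1..1}"
  proof (rule fundamental_theorem_of_calculus_interior)
    fix x :: real assume x: "x \<in> {-1<..<1}"
    have pos: "0 < 1 - x^2" using one_minus_square_pos[OF x] .
    have "((\<lambda>t. 1 - t^2) has_real_derivative - (2 * x)) (at x)"
      by (auto intro!: derivative_eq_intros)
    from DERIV_chain2[OF DERIV_real_sqrt[OF pos] this]
    have sqrt_deriv: "((\<lambda>t. sqrt (1 - t^2)) has_real_derivative inverse (sqrt (1 - x^2)) / 2 * (- (2 * x))) (at x)" .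
    have pow_deriv: "((\<lambda>t. t^(n+1)) has_real_derivative (n+1) * x^n) (at x)"
      using DERIV_pow[of "n+1" x] by simp
    have "(?F has_real_derivative
        (n+1) * x^n * sqrt (1 - x^2) + x^(n+1) * (inverse (sqrt (1 - x^2)) / 2 * (- (2 * x)))) (at x)"
      by (rule DERIV_cong[OF DERIV_mult[OF pow_deriv sqrt_deriv]]) simp
    moreover have "(n+1) * x^n * sqrt (1 - x^2) + x^(n+1) * (inverse (sqrt (1 - x^2)) / 2 * (- (2 * x)))
        = ?f x"
    proof -
      have "sqrt (1 - x^2) = (1 - x^2) / sqrt (1 - x^2)"
        using pos by (simp add: field_simps)
      then show ?thesis
        using pos by (simp add: field_simps power2_eq_square)
    qed
    ultimately have "(?F has_real_derivative ?f x) (at x)"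
      by simp
    then show "(?F has_vector_derivative ?f x) (at x)"
      by (simp add: has_real_derivative_iff_has_vector_derivative)
  qed (auto intro!: continuous_intros)
  then have "((\<lambda>t. ((n+1) * (t^n / sqrt (1 - t^2)) - ?f t) / (n+2)) has_integral
      ((n+1) * I - 0) / (n+2)) {-1..1}"
    by (intro has_integral_divide has_integral_diff has_integral_mult_right assms) simp
  then show ?thesis by (simp add: add_ac)
qed

lemma has_integral_arcsine_moment:
  "((\<lambda>t. t^n / sqrt (1 - t^2)) has_integral arcsine_moment n) {-1..1}"
proof (induction n rule: nat_less_induct)
  case (1 n)
  consider "n = 0" | "n = 1" | m where "n = m + 2"
    by (metis One_nat_def add_2_eq_Suc' not0_implies_Suc)
  then show ?case
  proof cases
    case 1
    have "((\<lambda>t. 1 / sqrt (1 - t^2)) has_integral (arcsin 1 - arcsin (-1))) {-1..1::real}"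
    proof (rule fundamental_theorem_of_calculus_interior)
      fix x :: real assume "x \<in> {-1<..<1}"
      then show "(arcsin has_vector_derivative 1 / sqrt (1 - x^2)) (at x)"
        using DERIV_arcsin[of x]
        by (simp add: has_real_derivative_iff_has_vector_derivative[symmetric] divide_inverse)
    qed (auto intro: continuous_on_arcsin')
    then show ?thesis by (simp add: 1 arcsine_moment_def)
  next
    case 2
    have "((\<lambda>t. t / sqrt (1 - t^2)) has_integral
        ((\<lambda>t. - sqrt (1 - t^2)) 1 - (\<lambda>t. - sqrt (1 - t^2)) (-1))) {-1..1::real}"
    proof (rule fundamental_theorem_of_calculus_interior)
      fix x :: real assume x: "x \<in> {-1<..<1}"
      have "((\<lambda>t. - sqrt (1 - t^2)) has_real_derivative x / sqrt (1 - x^2)) (at x)"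
        using one_minus_square_pos[OF x] by (auto intro!: derivative_eq_intros simp: field_simps)
      then show "((\<lambda>t. - sqrt (1 - t^2)) has_vector_derivative x / sqrt (1 - x^2)) (at x)"
        by (simp add: has_real_derivative_iff_has_vector_derivative)
    qed (auto intro!: continuous_intros)
    then show ?thesis by (simp add: 2 arcsine_moment_def)
  next
    case (3 m)
    have "((\<lambda>t. t^(m+2) / sqrt (1 - t^2)) has_integral (real m + 1) / (real m + 2) * arcsine_moment m) {-1..1}"
      by (rule has_integral_arcsine_moment_step) (use 1 3 in simp)
    moreover have "(real m + 1) / (real m + 2) * arcsine_moment m = arcsine_moment n"
      by (auto simp: 3 arcsine_moment_def central_binom_ratio_Suc algebra_simps)
    ultimately show ?thesis by (simp add: 3)
  qed
qed

lemma has_integral_power_pi_minus_arccos: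
  "((\<lambda>t. t^n * (pi - arccos t)) has_integral (pi - arcsine_moment (n+1)) / (n+1)) {-1..1}"
proof -
  let ?F = "\<lambda>t::real. t^(n+1) / (n+1) * (pi - arccos t)"
  let ?f = "\<lambda>t::real. t^n * (pi - arccos t) + t^(n+1) / (n+1) * (1 / sqrt (1 - t^2))"
  have "(?f has_integral (?F 1 - ?F (-1))) {-1..1}"
  proof (rule fundamental_theorem_of_calculus_interior)
    show "continuous_on {-1..1} ?F"
      by (intro continuous_intros continuous_on_arccos') auto
  next
    fix x :: real assume x: "x \<in> {-1<..<1}"
    have arccos_deriv: "((\<lambda>t. pi - arccos t) has_real_derivative - inverse (- sqrt (1 - x^2))) (at x)"
      using DERIV_diff[OF DERIV_const DERIV_arccos[of x]] x by simp
    have pow_deriv: "((\<lambda>t. t^(n+1) / (n+1)) has_real_derivative x^n) (at x)"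
      by (rule DERIV_cong[OF DERIV_cdivide[OF DERIV_pow[of "n+1" x]]]) simp
    have "(?F has_real_derivative ?f x) (at x)"
      by (rule DERIV_cong[OF DERIV_mult[OF pow_deriv arccos_deriv]]) (simp add: divide_inverse)
    then show "(?F has_vector_derivative ?f x) (at x)"
      by (simp add: has_real_derivative_iff_has_vector_derivative)
  qed simp
  then have "((\<lambda>t. ?f t - t^(n+1) / sqrt (1 - t^2) / (n+1)) has_integral
      (?F 1 - ?F (-1)) - arcsine_moment (n+1) / (n+1)) {-1..1}"
    by (intro has_integral_diff has_integral_divide has_integral_arcsine_moment)
  then show ?thesis
    by (simp add: diff_divide_distrib mult_ac)
qed

definition Kbar_moment :: "nat \<Rightarrow> real" where
  "Kbar_moment m = integral {-1..1} (\<lambda>t. Kbar t * t^m)"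

lemma has_integral_Kbar_power:
  "((\<lambda>t. Kbar t * t^m) has_integral
     ((pi - arcsine_moment (m+2)) / (m+2) + (pi - arcsine_moment (m+1)) / (m+1)) / (4*pi)) {-1..1}"
proof -
  have "((\<lambda>t. (t^(m+1) * (pi - arccos t) + t^m * (pi - arccos t)) / (4*pi)) has_integral
     ((pi - arcsine_moment (m+2)) / (m+2) + (pi - arcsine_moment (m+1)) / (m+1)) / (4*pi)) {-1..1}"
    using has_integral_power_pi_minus_arccos[of "m+1"] has_integral_power_pi_minus_arccos[of m]
    by (intro has_integral_divide has_integral_add) (simp_all add: add_ac)
  then show ?thesis
    by (simp add: Kbar_def field_simps)
qed

lemma has_integral_Kbar_moment: "((\<lambda>t. Kbar t * t^m) has_integral Kbar_moment m) {-1..1}"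
  unfolding Kbar_moment_def using has_integral_Kbar_power by (rule integrable_integral[OF has_integral_integrable])

lemma Kbar_moment_eq:
  "Kbar_moment m = (1 - arcsine_moment (m+2) / pi) / (4*(m+2)) + (1 - arcsine_moment (m+1) / pi) / (4*(m+1))"
proof -
  have "Kbar_moment m = ((pi - arcsine_moment (m+2)) / (m+2) + (pi - arcsine_moment (m+1)) / (m+1)) / (4*pi)"
    unfolding Kbar_moment_def using has_integral_Kbar_power by (rule integral_unique)
  moreover have "(pi - a) / x / (4*pi) = (1 - a / pi) / (4*x)" for a x :: real
    by (simp add: diff_divide_distrib mult_ac)
  ultimately show ?thesis
    by (simp add: add_divide_distrib)
qed

lemma Kbar_moment_even:
  "even m \<Longrightarrow> Kbar_moment m = 1/(4*(m+1)) + (1 - central_binom_ratio ((m+2) div 2)) / (4*(m+2))"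
  by (simp add: Kbar_moment_eq arcsine_moment_def field_simps)

lemma Kbar_moment_odd:
  "odd m \<Longrightarrow> Kbar_moment m = 1/(4*(m+2)) + (1 - central_binom_ratio ((m+1) div 2)) / (4*(m+1))"
  by (simp add: Kbar_moment_eq arcsine_moment_def field_simps)

lemma Kbar_moment_even_split:
  "even m \<Longrightarrow> Kbar_moment m =
    1/2 * (-1 / (2 * (real m + 1)) + 1 / (2 * (real m + 2)) * (1 - central_binom_ratio ((m+2) div 2)))
    + 1 / (2 * (real m + 1))"
proof -
  have "1/(4*y) + (1-c)/(4*z) = 1/2 * (-1/(2*y) + 1/(2*z) * (1-c)) + 1/(2*y)"
    if "y \<noteq> 0" "z \<noteq> 0" for y z c :: real
    using that by (simp add: field_simps)
  from this[of "real m + 1" "real m + 2" "central_binom_ratio ((m+2) div 2)"]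
  show "even m \<Longrightarrow> ?thesis"
    by (simp add: Kbar_moment_even add_ac)
qed

lemma Kbar_moment_odd_split:
  "odd m \<Longrightarrow> Kbar_moment m =
    1/2 * (1 / (2 * (real m + 1)) * (1 - central_binom_ratio ((m+1) div 2))) + 1 / (4 * (real m + 2))"
  by (simp add: Kbar_moment_odd add_ac)

section \<open>Higher derivatives of powers of 1 - t^2\<close>

definition deriv_power_coeff :: "nat \<Rightarrow> nat \<Rightarrow> real" where
  "deriv_power_coeff k n = (if k \<le> n then fact n / fact (n - k) else 0)"

lemma deriv_power_coeff_0 [simp]: "deriv_power_coeff 0 n = 1"
  by (simp add: deriv_power_coeff_def)

lemma deriv_power_coeff_pred:
  "1 \<le> k \<Longrightarrow> k \<le> n \<Longrightarrow> deriv_power_coeff (k - 1) n = deriv_power_coeff k n / (real (n - k) + 1)"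
proof -
  assume "1 \<le> k" "k \<le> n"
  then have "n - (k - 1) = Suc (n - k)"
    by simp
  with \<open>k \<le> n\<close> show ?thesis
    by (simp add: deriv_power_coeff_def)
qed

lemma has_real_derivative_deriv_power_coeff:
  "((\<lambda>x. deriv_power_coeff k n * x^(n - k)) has_real_derivative
     deriv_power_coeff (Suc k) n * x^(n - Suc k)) (at x)"
proof (cases "Suc k \<le> n")
  case True
  have "(fact (n - k) :: real) = real (n - k) * fact (n - Suc k)"
    using True by (metis Suc_diff_Suc Suc_le_lessD fact_Suc of_nat_fact)
  then show ?thesis
    using True DERIV_cmult[OF DERIV_pow[of "n - k" x], of "fact n / fact (n - k)"]
    by (simp add: deriv_power_coeff_def)
qed (auto simp: deriv_power_coeff_def)

lemma higher_deriv_sum_powers: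
  "(deriv ^^ k) (\<lambda>s. \<Sum>i\<in>I. c i * s^(n i)) = (\<lambda>x. \<Sum>i\<in>I. c i * (deriv_power_coeff k (n i) * x^(n i - k)))"
proof (induction k)
  case (Suc k)
  have "((\<lambda>x. \<Sum>i\<in>I. c i * (deriv_power_coeff k (n i) * x^(n i - k))) has_real_derivative
      (\<Sum>i\<in>I. c i * (deriv_power_coeff (Suc k) (n i) * x^(n i - Suc k)))) (at x)" for x
    by (intro DERIV_sum DERIV_cmult has_real_derivative_deriv_power_coeff)
  then show ?case
    using Suc by (auto intro!: DERIV_imp_deriv)
qed simp

lemma one_minus_square_power_expand:
  "(1 - s^2)^p = (\<Sum>q\<le>p. (-1)^q * real (p choose q) * s^(2*q))" for s :: real
proof -
  have "(1 - s^2)^p = (\<Sum>q\<le>p. real (p choose q) * (- (s^2))^q * 1^(p-q))"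
    using binomial_ring[of "- (s^2)" 1 p] by simp
  also have "\<dots> = (\<Sum>q\<le>p. (-1)^q * real (p choose q) * s^(2*q))"
  proof (rule sum.cong)
    fix q
    have "(- (s^2))^q = (-1)^q * s^(2*q)"
      by (subst power_minus) (simp add: power_mult)
    then show "real (p choose q) * (- (s^2))^q * 1^(p-q) = (-1)^q * real (p choose q) * s^(2*q)"
      by simp
  qed simp
  finally show ?thesis .
qed

lemma higher_deriv_one_minus_square_power:
  "(deriv ^^ k) (\<lambda>s. (1 - s^2)^p) x =
     (\<Sum>q\<le>p. (-1)^q * real (p choose q) * (deriv_power_coeff k (2*q) * x^(2*q - k)))"
  unfolding one_minus_square_power_expand higher_deriv_sum_powers ..

lemma higher_deriv_poly: "(deriv ^^ k) (poly P) = poly ((pderiv ^^ k) P)" for P :: "real poly"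
proof (induction k)
  case (Suc k)
  then show ?case
    by (auto intro!: DERIV_imp_deriv poly_DERIV)
qed simp

lemma linear_power_dvd_higher_pderiv:
  fixes Q :: "real poly"
  assumes "[:-a, 1:]^m dvd Q" "j \<le> m"
  shows "[:-a, 1:]^(m - j) dvd (pderiv ^^ j) Q"
  using assms(2)
proof (induction j)
  case (Suc j)
  then have "[:-a, 1:]^Suc (m - Suc j) dvd (pderiv ^^ j) Q"
    by (simp add: Suc_diff_Suc)
  then obtain g where g: "(pderiv ^^ j) Q = [:-a, 1:]^Suc (m - Suc j) * g"
    by (rule dvdE)
  have "[:-a, 1:]^(m - Suc j) dvd pderiv ([:-a, 1:]^Suc (m - Suc j)) * g"
    unfolding pderiv_power_Suc by (intro dvd_mult2 dvd_smult dvd_refl)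
  moreover have "[:-a, 1:]^(m - Suc j) dvd [:-a, 1:]^Suc (m - Suc j) * pderiv g"
    by (intro dvd_mult2 le_imp_power_dvd) simp
  moreover have "(pderiv ^^ Suc j) Q =
      pderiv ([:-a, 1:]^Suc (m - Suc j)) * g + [:-a, 1:]^Suc (m - Suc j) * pderiv g"
    by (simp only: funpow.simps(2) o_apply g pderiv_mult add.commute mult.commute)
  ultimately show ?case
    by (metis dvd_add)
qed (use assms(1) in simp)

lemma higher_deriv_one_minus_square_power_at_1:
  assumes "j < p"
  shows "(deriv ^^ j) (\<lambda>s::real. (1 - s^2)^p) 1 = 0"
proof -
  have poly_eq: "poly ([:1, 0, -1:]^p) = (\<lambda>s::real. (1 - s^2)^p)"
    by (simp add: fun_eq_iff poly_power power2_eq_square)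
  have "[:-1, 1:] * [:-1, -1:] = [:1, 0, -1 :: real:]"
    by simp
  then have "[:-1, 1:]^p dvd [:1, 0, -1 :: real:]^p"
    by (metis dvd_power_same dvd_triv_left)
  then have "[:-1, 1:]^(p - j) dvd (pderiv ^^ j) ([:1, 0, -1 :: real:]^p)"
    using assms by (intro linear_power_dvd_higher_pderiv) auto
  moreover have "[:-1, 1 :: real:] dvd [:-1, 1:]^(p - j)"
    using assms by (simp add: dvd_power)
  ultimately have "[:-1, 1 :: real:] dvd (pderiv ^^ j) ([:1, 0, -1:]^p)"
    using dvd_trans by blast
  then have "poly ((pderiv ^^ j) ([:1, 0, -1:]^p)) (1::real) = 0"
    by (simp add: poly_eq_0_iff_dvd)
  moreover have "(deriv ^^ j) (\<lambda>s::real. (1 - s^2)^p) = poly ((pderiv ^^ j) ([:1, 0, -1:]^p))"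
    using higher_deriv_poly[of j "[:1, 0, -1:]^p"] unfolding poly_eq .
  ultimately show ?thesis
    by simp
qed

lemma alternating_sum_deriv_power_coeff:
  assumes "j < p"
  shows "(\<Sum>q\<le>p. (-1)^q * real (p choose q) * deriv_power_coeff j (2*q)) = 0"
proof -
  have "(\<Sum>q\<le>p. (-1)^q * real (p choose q) * deriv_power_coeff j (2*q)) =
      (deriv ^^ j) (\<lambda>s. (1 - s^2)^p) 1"
    by (simp add: higher_deriv_one_minus_square_power mult.assoc)
  also have "\<dots> = 0"
    using assms by (rule higher_deriv_one_minus_square_power_at_1)
  finally show ?thesis .
qed

section \<open>The coefficients as finite sums of kernel moments\<close>

lemma Vd_mult_Rodrigues_constant:
  assumes "d > 0"
  shows "Vd d * ((-1)^k / 2^k * Gamma (real d / 2) / Gamma (real k + real d / 2)) = C1 d k"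
proof -
  have Gamma_Suc: "Gamma (real d / 2 + 1) = real d / 2 * Gamma (real d / 2)"
    using assms by (intro Gamma_plus1) (auto elim!: nonpos_Ints_cases)
  have cancel: "P / (D * a) * (s / c * a / b) = P / D * (s / c) * (1 / b)" if "a > 0"
    for P D a s b c :: real
    using that by simp
  show ?thesis
    unfolding Vd_def C1_def Gamma_Suc using assms by (intro cancel Gamma_real_pos) simp
qed

lemma ccoef_eq_Kbar_moment_sum:
  fixes k d :: nat
  assumes "d > 0"
  defines "p \<equiv> k + (d div 2 - 1)"
  shows "ccoef k d = C1 d k *
    (\<Sum>q\<le>p. (-1)^q * real (p choose q) * deriv_power_coeff k (2*q) * Kbar_moment (2*q - k))"
proof -
  define G where "G = (-1)^k / 2^k * Gamma (real d / 2) / Gamma (real k + real d / 2)"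
  define S where "S = (\<Sum>q\<le>p. (-1)^q * real (p choose q) * deriv_power_coeff k (2*q) * Kbar_moment (2*q - k))"
  have "((\<lambda>t. \<Sum>q\<le>p. (-1)^q * real (p choose q) * deriv_power_coeff k (2*q) * (Kbar t * t^(2*q - k)))
      has_integral S) {-1..1}"
    unfolding S_def by (intro has_integral_sum has_integral_mult_right has_integral_Kbar_moment) simp
  then have "((\<lambda>t. G * (Kbar t * (deriv ^^ k) (\<lambda>s. (1 - s^2)^p) t)) has_integral G * S) {-1..1}"
    by (intro has_integral_mult_right)
       (simp add: higher_deriv_one_minus_square_power sum_distrib_left mult_ac)
  \<comment> \<open>Away from \<open>t = \<plusminus>1\<close> the weight cancels the factor \<open>1 / (1 - t\<^sup>2)\<^bsup>(d-2)/2\<^esup>\<close>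
    of the Rodrigues formula; at the endpoints that factor is the junk value \<open>1/0 = 0\<close>.\<close>
  moreover have "G * (Kbar t * (deriv ^^ k) (\<lambda>s. (1 - s^2)^p) t) =
      Kbar t * gegenbauer k d t * (1 - t^2) ^ (d div 2 - 1)" if "t \<in> {-1..1} - {-1, 1}" for t
  proof -
    have "(1 - t^2) ^ (d div 2 - 1) \<noteq> 0"
      using that one_minus_square_pos[of t] by auto
    then show ?thesis
      by (simp add: gegenbauer_def G_def p_def)
  qed
  ultimately have "ccoef k d = Vd d * (G * S)"
    unfolding ccoef_def by (metis (no_types, lifting) has_integral_spike_finite_eq finite.emptyI
        finite_insert integral_unique)
  also have "\<dots> = C1 d k * S"
    by (simp only: mult.assoc[symmetric] G_def Vd_mult_Rodrigues_constant[OF assms(1)])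
  finally show ?thesis
    unfolding S_def .
qed

lemma C2_eq_deriv_power_coeff:
  "k \<le> 2*q \<Longrightarrow> C2 q d k = (-1)^q * real ((k + (d div 2 - 1)) choose q) * deriv_power_coeff k (2*q)"
  by (simp add: C2_def deriv_power_coeff_def)

lemma sum_from_ceiling_half:
  "(\<Sum>q = nat \<lceil>real k / 2\<rceil>..p. f q) = (\<Sum>q\<le>p. if k \<le> 2*q then f q else 0)"
proof -
  have iff: "nat \<lceil>real k / 2\<rceil> \<le> q \<longleftrightarrow> k \<le> 2*q" for q
  proof -
    have "nat \<lceil>real k / 2\<rceil> \<le> q \<longleftrightarrow> real k / 2 \<le> real q"
      by (simp add: nat_le_iff ceiling_le_iff)
    then show ?thesis
      by linarith
  qed
  have "{nat \<lceil>real k / 2\<rceil>..p} = {..p} \<inter> {q. k \<le> 2*q}"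
  proof (rule set_eqI)
    show "q \<in> {nat \<lceil>real k / 2\<rceil>..p} \<longleftrightarrow> q \<in> {..p} \<inter> {q. k \<le> 2*q}" for q
      using iff[of q] by auto
  qed
  then show ?thesis
    by (simp add: sum.inter_restrict)
qed

lemma deriv_power_coeff_mult_Kbar_moment_even:
  fixes k q :: nat
  assumes "even k" "k \<ge> 2"
  shows "deriv_power_coeff k (2*q) * Kbar_moment (2*q - k) =
    1/2 * (if k \<le> 2*q then deriv_power_coeff k (2*q) *
      (-1 / (2 * (2*real q - real k + 1))
       + 1 / (2 * (2*real q - real k + 2))
         * (1 - 1 / 2^(2*q-k+2) * real ((2*q-k+2) choose ((2*q-k+2) div 2)))) else 0)
    + 1/2 * deriv_power_coeff (k-1) (2*q)"
proof (cases "k \<le> 2*q")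
  case True
  define m where "m = 2*q - k"
  have "even m"
    using assms(1) True by (simp add: m_def)
  have "1 / 2^(2*q-k+2) * real ((2*q-k+2) choose ((2*q-k+2) div 2)) = central_binom_ratio ((m+2) div 2)"
    using central_binom_ratio_binomial[of "m+2"] \<open>even m\<close> by (simp add: m_def)
  moreover have "2*real q - real k = real m"
    using True by (simp add: m_def of_nat_diff)
  moreover have "deriv_power_coeff (k-1) (2*q) = deriv_power_coeff k (2*q) / (real m + 1)"
    using deriv_power_coeff_pred[of k "2*q"] True assms(2) by (simp add: m_def)
  ultimately show ?thesis
    using True Kbar_moment_even_split[OF \<open>even m\<close>] by (simp add: m_def[symmetric] ring_distribs)
next
  case False
  with assms(1) have "\<not> k - 1 \<le> 2*q"
    by presburger
  with False show ?thesis
    by (simp add: deriv_power_coeff_def)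
qed

lemma deriv_power_coeff_mult_Kbar_moment_odd:
  fixes k q :: nat
  assumes "odd k" "k \<ge> 3"
  shows "deriv_power_coeff k (2*q) * Kbar_moment (2*q - k) =
    1/2 * (if k \<le> 2*q then deriv_power_coeff k (2*q) *
      (1 / (2 * (2*real q - real k + 1))
         * (1 - 1 / 2^(2*q-k+1) * real ((2*q-k+1) choose ((2*q-k+1) div 2)))) else 0)
    + 1/4 * (deriv_power_coeff (k-1) (2*q) - deriv_power_coeff (k-2) (2*q))"
proof (cases "k \<le> 2*q")
  case True
  define m where "m = 2*q - k"
  have "odd m"
    using assms(1) True by (simp add: m_def)
  have "1 / 2^(2*q-k+1) * real ((2*q-k+1) choose ((2*q-k+1) div 2)) = central_binom_ratio ((m+1) div 2)"
    using central_binom_ratio_binomial[of "m+1"] \<open>odd m\<close> by (simp add: m_def)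
  moreover have "2*real q - real k = real m"
    using True by (simp add: m_def of_nat_diff)
  moreover have pred1: "deriv_power_coeff (k-1) (2*q) = deriv_power_coeff k (2*q) / (real m + 1)"
    using deriv_power_coeff_pred[of k "2*q"] True assms(2) by (simp add: m_def)
  moreover have "deriv_power_coeff (k-2) (2*q) = deriv_power_coeff (k-1) (2*q) / (real m + 2)"
    using deriv_power_coeff_pred[of "k-1" "2*q"] True assms(2)
    by (simp add: m_def of_nat_diff diff_diff_left numeral_2_eq_2 add_ac)
  then have "deriv_power_coeff (k-1) (2*q) - deriv_power_coeff (k-2) (2*q) = deriv_power_coeff k (2*q) / (real m + 2)"
    unfolding pred1 by (simp add: divide_simps) (simp add: algebra_simps)
  ultimately show ?thesis
    using True Kbar_moment_odd_split[OF \<open>odd m\<close>] by (simp add: m_def[symmetric] ring_distribs)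
next
  case False
  obtain a where "k = 2*a + 1"
    using assms(1) by (rule oddE)
  with False consider "2*q = k - 1" | "2*q + 2 < k"
    by (cases "q = a") auto
  then have "deriv_power_coeff (k-1) (2*q) = deriv_power_coeff (k-2) (2*q)"
  proof cases
    case 1
    moreover have "k - 1 - (k - 2) = 1"
      using assms(2) by simp
    ultimately show ?thesis
      by (simp add: deriv_power_coeff_def)
  qed (simp add: deriv_power_coeff_def)
  with False show ?thesis
    by (simp add: deriv_power_coeff_def)
qed

lemma alternating_binomial_sum_Kbar_moment_even:
  "(\<Sum>q\<le>e. (-1)^q * real (e choose q) * Kbar_moment (2*q)) =
    1/4 * (1 / (2 * (real e + 1) * central_binom_ratio (Suc e)))
    + 1/4 * (central_binom_ratio (Suc e) / (2 * (real e + 1)))"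
proof -
  have "Kbar_moment (2*q) =
      1/4 * (1 / (2*real q + 1)) + 1/4 * ((1 - central_binom_ratio (Suc q)) / (2*real q + 2))" for q
    using Kbar_moment_even[of "2*q"] by (simp add: add_ac)
  then have "(-1)^q * real (e choose q) * Kbar_moment (2*q) =
      1/4 * ((-1)^q * real (e choose q) / (2*real q + 1))
      + 1/4 * ((-1)^q * real (e choose q) * (1 - central_binom_ratio (Suc q)) / (2*real q + 2))" for q
    by (simp add: ring_distribs)
  then show ?thesis
    unfolding alternating_binomial_sum_odd_reciprocal[symmetric]
      alternating_binomial_sum_one_minus_central_binom_ratio[symmetric]
    by (simp add: sum.distrib sum_distrib_left)
qed

lemma ccoef_0_closed_form:
  fixes d :: nat
  assumes "d \<ge> 2" "even d"
  shows "ccoef 0 d = 1/2 * C1 d 0 *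
      (1 / (real d * 2^(d+1)) * real (d choose (d div 2))
       + 2^(d-1) / (real d * real ((d-1) choose (d div 2)))
       - 1/2 * (\<Sum>q=0..(d-2) div 2. (-1)^q * real (((d-2) div 2) choose q) / (2*real q + 1)))"
proof -
  have "d = 2 * (d div 2 - 1) + 2"
    using assms by auto
  then obtain e where d: "d = 2*e + 2"
    by blast
  define c where "c = central_binom_ratio (Suc e)"
  have "c > 0"
    unfolding c_def by (rule central_binom_ratio_pos)
  have ccoef_0: "ccoef 0 d = C1 d 0 * (1/4 * (1 / (2 * (real e + 1) * c)) + 1/4 * (c / (2 * (real e + 1))))"
    using ccoef_eq_Kbar_moment_sum[of d 0] alternating_binomial_sum_Kbar_moment_even[of e]
    by (simp add: d c_def)
  have binomial_d: "1 / (real d * 2^(d+1)) * real (d choose (d div 2)) = c / (4 * (real e + 1))"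
  proof -
    have "real (d choose (d div 2)) = 2^d * c"
      using central_binom_ratio_binomial[of d] assms(2) by (simp add: d c_def field_simps)
    then have "1 / (real d * 2^(d+1)) * real (d choose (d div 2)) = c / (2 * real d)"
      by simp
    then show ?thesis
      by (simp add: d)
  qed
  have binomial_d_minus_1: "2^(d-1) / (real d * real ((d-1) choose (d div 2))) = 1 / (2 * (real e + 1) * c)"
    using \<open>c > 0\<close> by (simp add: d c_def central_binom_ratio_Suc_odd_binomial field_simps)
  have alternating_sum: "(\<Sum>q=0..(d-2) div 2. (-1)^q * real (((d-2) div 2) choose q) / (2*real q + 1)) =
      1 / (2 * (real e + 1) * c)"
    using alternating_binomial_sum_odd_reciprocal[of e] by (simp add: d c_def atLeast0AtMost)
  have combine: "C * (1/4 * (1 / (2 * y * c)) + 1/4 * (c / (2 * y))) =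
      1/2 * C * (c / (4 * y) + 1 / (2 * y * c) - 1/2 * (1 / (2 * y * c)))" if "y > 0" for C y :: real
    using that \<open>c > 0\<close> by (simp add: field_simps)
  show ?thesis
    unfolding ccoef_0 binomial_d binomial_d_minus_1 alternating_sum by (rule combine) simp
qed

lemma ccoef_1_closed_form:
  fixes d :: nat
  assumes "d > 0"
  shows "ccoef 1 d = 1/2 * C1 d 1 *
      (\<Sum>q=1..1 + (d-2) div 2. C2 q d 1 *
         (1 / (2 * (2*real q + 1))
          + 1 / (4 * real q) * (1 - 1 / 2^(2*q) * real ((2*q) choose q))))"
proof -
  define p where "p = 1 + (d div 2 - 1)"
  define E where "E q = 1 / (2 * (2*real q + 1))
          + 1 / (4 * real q) * (1 - 1 / 2^(2*q) * real ((2*q) choose q))" for q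
  have split: "(-1)^q * real (p choose q) * deriv_power_coeff 1 (2*q) * Kbar_moment (2*q - 1) =
      1/2 * (if 1 \<le> 2*q then C2 q d 1 * E q else 0)" for q
  proof (cases "q = 0")
    case False
    have "odd (2*q - 1)" "real (2*q - 1) = 2 * real q - 1" "(2*q - 1 + 1) div 2 = q"
      using False by (auto simp: of_nat_diff)
    then have "Kbar_moment (2*q - 1) = 1/(4*(2*real q + 1)) + (1 - central_binom_ratio q)/(4*(2*real q))"
      using Kbar_moment_odd[of "2*q - 1"] by (simp add: add_ac)
    moreover have "E q = 1/(2*(2*real q + 1)) + 1/(4*real q) * (1 - central_binom_ratio q)"
      using central_binom_ratio_binomial[of "2*q"] by (simp add: E_def)
    ultimately have "Kbar_moment (2*q - 1) = 1/2 * E q"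
      by (simp add: ring_distribs diff_divide_distrib)
    then show ?thesis
      using False by (simp add: C2_eq_deriv_power_coeff p_def)
  qed (simp add: deriv_power_coeff_def)
  have "ccoef 1 d = C1 d 1 *
      (\<Sum>q\<le>p. (-1)^q * real (p choose q) * deriv_power_coeff 1 (2*q) * Kbar_moment (2*q - 1))"
    using ccoef_eq_Kbar_moment_sum[OF assms, of 1] unfolding p_def .
  also have "\<dots> = 1/2 * C1 d 1 * (\<Sum>q\<le>p. if 1 \<le> 2*q then C2 q d 1 * E q else 0)"
    unfolding split by (simp add: sum_distrib_left)
  also have "(\<Sum>q\<le>p. if 1 \<le> 2*q then C2 q d 1 * E q else 0) = (\<Sum>q=1..p. C2 q d 1 * E q)"
  proof -
    have "nat \<lceil>real 1 / 2\<rceil> = (1::nat)"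
      by (simp add: nat_eq_iff ceiling_eq_iff)
    then show ?thesis
      using sum_from_ceiling_half[where k=1 and p=p and f="\<lambda>q. C2 q d 1 * E q"] by simp
  qed
  also have "p = 1 + (d-2) div 2"
    by (simp add: p_def)
  finally show ?thesis
    unfolding E_def .
qed

lemma ccoef_even_closed_form:
  fixes d k :: nat
  assumes "d > 0" "even k" "k \<ge> 2"
  shows "ccoef k d = 1/2 * C1 d k *
      (\<Sum>q = nat \<lceil>real k / 2\<rceil>..k + (d-2) div 2. C2 q d k *
         (-1 / (2 * (2*real q - real k + 1))
          + 1 / (2 * (2*real q - real k + 2))
            * (1 - 1 / 2^(2*q-k+2) * real ((2*q-k+2) choose ((2*q-k+2) div 2)))))"
proof -
  define p where "p = k + (d div 2 - 1)"
  define s where "s j q = (-1)^q * real (p choose q) * deriv_power_coeff j (2*q)" for j q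
  define E where "E q = -1 / (2 * (2*real q - real k + 1))
          + 1 / (2 * (2*real q - real k + 2))
            * (1 - 1 / 2^(2*q-k+2) * real ((2*q-k+2) choose ((2*q-k+2) div 2)))" for q
  have "s k q * Kbar_moment (2*q - k) = 1/2 * (if k \<le> 2*q then C2 q d k * E q else 0) + 1/2 * s (k-1) q"
    for q
    using deriv_power_coeff_mult_Kbar_moment_even[OF assms(2,3), of q]
    by (simp add: s_def E_def p_def C2_eq_deriv_power_coeff mult.assoc ring_distribs)
  then have "(\<Sum>q\<le>p. s k q * Kbar_moment (2*q - k)) =
      1/2 * (\<Sum>q\<le>p. if k \<le> 2*q then C2 q d k * E q else 0) + 1/2 * (\<Sum>q\<le>p. s (k-1) q)"
    by (simp add: sum.distrib sum_distrib_left)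
  moreover have "(\<Sum>q\<le>p. s (k-1) q) = 0"
    using assms(3) unfolding s_def p_def by (intro alternating_sum_deriv_power_coeff) simp
  ultimately have "ccoef k d = 1/2 * C1 d k * (\<Sum>q\<le>p. if k \<le> 2*q then C2 q d k * E q else 0)"
    using ccoef_eq_Kbar_moment_sum[OF assms(1), of k] by (simp add: s_def p_def)
  moreover have "(d-2) div 2 = d div 2 - 1"
    by simp
  ultimately show ?thesis
    unfolding sum_from_ceiling_half E_def p_def by simp
qed

lemma ccoef_odd_closed_form:
  fixes d k :: nat
  assumes "d > 0" "odd k" "k \<ge> 3"
  shows "ccoef k d = 1/2 * C1 d k *
      (\<Sum>q = nat \<lceil>real k / 2\<rceil>..k + (d-2) div 2. C2 q d k *
         (1 / (2 * (2*real q - real k + 1))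
            * (1 - 1 / 2^(2*q-k+1) * real ((2*q-k+1) choose ((2*q-k+1) div 2)))))"
proof -
  define p where "p = k + (d div 2 - 1)"
  define s where "s j q = (-1)^q * real (p choose q) * deriv_power_coeff j (2*q)" for j q
  define E where "E q = 1 / (2 * (2*real q - real k + 1))
            * (1 - 1 / 2^(2*q-k+1) * real ((2*q-k+1) choose ((2*q-k+1) div 2)))" for q
  have "s k q * Kbar_moment (2*q - k) =
      1/2 * (if k \<le> 2*q then C2 q d k * E q else 0) + 1/4 * (s (k-1) q - s (k-2) q)" for q
    using deriv_power_coeff_mult_Kbar_moment_odd[OF assms(2,3), of q]
    by (simp add: s_def E_def p_def C2_eq_deriv_power_coeff mult.assoc ring_distribs)
  then have "(\<Sum>q\<le>p. s k q * Kbar_moment (2*q - k)) =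
      1/2 * (\<Sum>q\<le>p. if k \<le> 2*q then C2 q d k * E q else 0)
      + 1/4 * ((\<Sum>q\<le>p. s (k-1) q) - (\<Sum>q\<le>p. s (k-2) q))"
    by (simp add: sum.distrib sum_subtractf sum_distrib_left flip: sum_divide_distrib)
  moreover have "(\<Sum>q\<le>p. s j q) = 0" if "j < k" for j
    using that unfolding s_def p_def by (intro alternating_sum_deriv_power_coeff) simp
  ultimately have "ccoef k d = 1/2 * C1 d k * (\<Sum>q\<le>p. if k \<le> 2*q then C2 q d k * E q else 0)"
    using ccoef_eq_Kbar_moment_sum[OF assms(1), of k] assms(3) by (simp add: s_def p_def)
  moreover have "(d-2) div 2 = d div 2 - 1"
    by simp
  ultimately show ?thesis
    unfolding sum_from_ceiling_half E_def p_def by simp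
qed

theorem mainTheorem7:
  fixes d :: nat
  assumes "d \<ge> 2" and "even d"
  shows
   "ccoef 0 d = 1/2 * C1 d 0 *
      (1 / (real d * 2^(d+1)) * real (d choose (d div 2))
       + 2^(d-1) / (real d * real ((d-1) choose (d div 2)))
       - 1/2 * (\<Sum>q=0..(d-2) div 2. (-1)^q * real (((d-2) div 2) choose q) / (2*real q + 1))) \<and>
   ccoef 1 d = 1/2 * C1 d 1 *
      (\<Sum>q=1..1 + (d-2) div 2. C2 q d 1 *
         (1 / (2 * (2*real q + 1))
          + 1 / (4 * real q) * (1 - 1 / 2^(2*q) * real ((2*q) choose q)))) \<and>
   (\<forall>k::nat. k \<ge> 2 \<longrightarrow> even k \<longrightarrow>
      ccoef k d = 1/2 * C1 d k *
      (\<Sum>q = nat \<lceil>real k / 2\<rceil>..k + (d-2) div 2. C2 q d k *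
         (-1 / (2 * (2*real q - real k + 1))
          + 1 / (2 * (2*real q - real k + 2))
            * (1 - 1 / 2^(2*q-k+2) * real ((2*q-k+2) choose ((2*q-k+2) div 2)))))) \<and>
   (\<forall>k::nat. k \<ge> 3 \<longrightarrow> odd k \<longrightarrow>
      ccoef k d = 1/2 * C1 d k *
      (\<Sum>q = nat \<lceil>real k / 2\<rceil>..k + (d-2) div 2. C2 q d k *
         (1 / (2 * (2*real q - real k + 1))
            * (1 - 1 / 2^(2*q-k+1) * real ((2*q-k+1) choose ((2*q-k+1) div 2))))))"
proof -
  have "d > 0"
    using assms(1) by simp
  then show ?thesis
    using ccoef_0_closed_form[OF assms] ccoef_1_closed_form ccoef_even_closed_form ccoef_odd_closed_form
    by blast
qed

end
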